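(* Let $M\subset\mathbf{R}^{n+1}$ be a smooth closed connected mean convex hypersurface and let $u$ be the arrival time of the mean curvature flow starting from $M$. Suppose $k\ge 1$, $p\in\mathcal{S}_k\setminus\mathcal{S}_{k-1}$, and $u$ is $C^2$ at $p$. If $q_j$ is a sequence of regular points (points with $\nabla u(q_j)\neq 0$) converging to $p$, then $$\Pi_{\text{axis}}(\mathbf{n}(q_j))\to 0.$$
   Context: Mean convex means the mean curvature is non-negative. The arrival time $u$ is defined on the compact domain bounded by $M$: $u(x)$ is the time at which the front passes through $x$; equivalently $u$ is the Lipschitz viscosity solution of $-1=|\nabla u|\,\mathrm{div}(\nabla u/|\nabla u|)$ with $u=0$ on $M$, and it is smooth where $\nabla u\ne 0$. The singular set is $\mathcal{S}=\{\nabla u=0\}$; at each singular point the tangent flow is a cylinder $\mathbf{S}^{n-j}\times\mathbf{R}^j$, $0\le j\le n-1$. $\mathcal{S}_k$ is the set of singular points whose tangent flow splits off a Euclidean factor of dimension at most $k$, so $\mathcal{S}_k\setminus\mathcal{S}_{k-1}$ consists of singular points with blowup $\mathbf{R}^k\times\mathbf{S}^{n-k}$. It is known that $u$ is twice differentiable everywhere and at such $p$, $\mathrm{Hess}_u(p)=-\frac{1}{n-k}\Pi$, where $\Pi$ is orthogonal projection onto the orthogonal complement of the $\mathbf{R}^k$ factor (the axis); $\Pi_{\text{axis}}$ denotes orthogonal projection onto the $k$-plane of the axis (the kernel of $\mathrm{Hess}_u(p)$). At a regular point $q$, $\mathbf{n}(q)=\nabla u(q)/|\nabla u(q)|$ is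 the unit normal to the level set of $u$ through $q$. *)

theory Defs
  imports "HOL-Analysis.Analysis"
begin

definition grad :: "('a::euclidean_space \<Rightarrow> real) \<Rightarrow> 'a \<Rightarrow> 'a" where
  "grad u x = (\<Sum>b\<in>Basis. frechet_derivative u (at x) b *\<^sub>R b)"

definition hess :: "('a::euclidean_space \<Rightarrow> real) \<Rightarrow> 'a \<Rightarrow> 'a \<Rightarrow> 'a" where
  "hess u x = frechet_derivative (grad u) (at x)"

definition divg :: "('a::euclidean_space \<Rightarrow> 'a) \<Rightarrow> 'a \<Rightarrow> real" where
  "divg F x = (\<Sum>b\<in>Basis. frechet_derivative F (at x) b \<bullet> b)"

definition orth_proj :: "'a::euclidean_space set \<Rightarrow> 'a \<Rightarrow> 'a" where
  "orth_proj A v = (THE a. a \<in> A \<and> (\<forall>b\<in>A. (v - a) \<bullet> b = 0))"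

end

theory Submission
  imports Defs
begin

text \<open>At a regular point the flow equation reads \<open>tr Hess u - \<langle>\<nu>, Hess u \<nu>\<rangle> = -1\<close> for the unit
  normal \<open>\<nu>\<close>. Near \<open>p\<close> the Hessian is close to \<open>-(1/(n-k))(I - \<Pi>_axis)\<close>, whose trace is
  \<open>-(n+1-k)/(n-k)\<close> and whose quadratic form at a unit vector \<open>\<nu>\<close> is \<open>-(1 - |\<Pi>_axis \<nu>|\<^sup>2)/(n-k)\<close>.
  Substituting into the equation gives \<open>|\<Pi>_axis \<nu>|\<^sup>2 \<rightarrow> 1 - (n+1-k) + (n-k) = 0\<close>.\<close>

definition lin_trace :: "('a::euclidean_space \<Rightarrow> 'a) \<Rightarrow> real" where
  "lin_trace H = (\<Sum>b\<in>Basis. H b \<bullet> b)"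

lemma orth_proj_unique:
  assumes "subspace A" and "a \<in> A" and "\<forall>b\<in>A. (v - a) \<bullet> b = 0"
  shows "orth_proj A v = a"
  unfolding orth_proj_def
proof (rule the_equality)
  show "a \<in> A \<and> (\<forall>b\<in>A. (v - a) \<bullet> b = 0)" using assms by blast
next
  fix a' assume a': "a' \<in> A \<and> (\<forall>b\<in>A. (v - a') \<bullet> b = 0)"
  have "a - a' \<in> A" using a' assms by (simp add: subspace_diff)
  then have "(v - a') \<bullet> (a - a') = 0" "(v - a) \<bullet> (a - a') = 0" using a' assms by auto
  then have "(a - a') \<bullet> (a - a') = 0" by (simp add: inner_diff_left inner_diff_right)
  then show "a' = a" by simp
qed

lemma orth_proj_mem_orthogonal:
  assumes "subspace A"
  shows "orth_proj A v \<in> A" and "\<forall>b\<in>A. (v - orth_proj A v) \<bullet> b = 0"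
proof -
  obtain y z where y: "y \<in> span A" and z: "\<And>w. w \<in> span A \<Longrightarrow> orthogonal z w" and v: "v = y + z"
    using orthogonal_subspace_decomp_exists[of A v] by metis
  have "y \<in> A" using y assms by (metis span_eq_iff)
  moreover have "\<forall>b\<in>A. (v - y) \<bullet> b = 0" using z v by (simp add: span_base orthogonal_def)
  ultimately show "orth_proj A v \<in> A" "\<forall>b\<in>A. (v - orth_proj A v) \<bullet> b = 0"
    using orth_proj_unique[OF assms] by auto
qed

lemma inner_orth_proj_self:
  assumes "subspace A"
  shows "v \<bullet> orth_proj A v = (norm (orth_proj A v))\<^sup>2"
  using orth_proj_mem_orthogonal[OF assms, of v]
  by (simp add: inner_diff_left power2_norm_eq_inner)

lemma orth_proj_orthonormal_basis:
  assumes orth: "pairwise orthogonal B" and unit: "\<And>e. e \<in> B \<Longrightarrow> norm e = 1"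
    and span: "span B = A"
  shows "orth_proj A v = (\<Sum>e\<in>B. (v \<bullet> e) *\<^sub>R e)"
proof (rule orth_proj_unique)
  show "subspace A" using span subspace_span by blast
  show "(\<Sum>e\<in>B. (v \<bullet> e) *\<^sub>R e) \<in> A"
    unfolding span[symmetric] by (intro span_sum span_scale span_base)
  have "(\<Sum>e\<in>B. (e \<bullet> v / (e \<bullet> e)) *\<^sub>R e) = (\<Sum>e\<in>B. (v \<bullet> e) *\<^sub>R e)"
    using unit by (intro sum.cong) (auto simp: inner_commute norm_eq_1)
  then show "\<forall>b\<in>A. (v - (\<Sum>e\<in>B. (v \<bullet> e) *\<^sub>R e)) \<bullet> b = 0"
    using Gram_Schmidt_step[OF orth, of _ v] span by (metis orthogonal_def inner_commute)
qed

lemma lin_trace_orth_proj: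
  assumes "subspace A"
  shows "lin_trace (orth_proj A) = real (dim A)"
proof -
  obtain B where orth: "pairwise orthogonal B" and unit: "\<And>e. e \<in> B \<Longrightarrow> norm e = 1"
    and "independent B" and card: "card B = dim A" and span: "span B = A"
    using orthonormal_basis_subspace[OF assms] by metis
  note P = orth_proj_orthonormal_basis[OF orth unit span]
  have "lin_trace (orth_proj A) = (\<Sum>b\<in>Basis. \<Sum>e\<in>B. (b \<bullet> e) * (e \<bullet> b))"
    by (simp add: lin_trace_def P inner_sum_left)
  also have "\<dots> = (\<Sum>e\<in>B. \<Sum>b\<in>Basis. (e \<bullet> b) * (e \<bullet> b))"
    by (subst sum.swap) (simp add: inner_commute)
  also have "\<dots> = (\<Sum>e\<in>B. e \<bullet> e)"
    by (simp add: euclidean_inner[symmetric])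
  also have "\<dots> = real (dim A)" using unit card by (simp add: norm_eq_1)
  finally show ?thesis .
qed

lemma linear_inner_basis_expansion:
  assumes "linear H"
  shows "w \<bullet> H z = (\<Sum>b\<in>Basis. (z \<bullet> b) * (w \<bullet> H b))"
proof -
  have "H z = (\<Sum>b\<in>Basis. (z \<bullet> b) *\<^sub>R H b)"
    using linear_sum[OF assms] linear_scale[OF assms] euclidean_representation[of z]
    by (metis (no_types, lifting) sum.cong)
  then show ?thesis by (simp add: inner_sum_right)
qed

lemma norm_mult_divg_normalized:
  fixes g :: "'a::euclidean_space \<Rightarrow> 'a"
  assumes gd: "(g has_derivative H) (at x)" and nz: "g x \<noteq> 0"
  defines "\<nu> \<equiv> g x /\<^sub>R norm (g x)"
  shows "norm (g x) * divg (\<lambda>y. g y /\<^sub>R norm (g y)) x = lin_trace H - \<nu> \<bullet> H \<nu>"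
proof -
  define N where "N = norm (g x)"
  have N: "N > 0" using nz by (simp add: N_def)
  have lin: "linear H" using gd has_derivative_linear by blast
  have nd: "((\<lambda>y. norm (g y)) has_derivative (\<lambda>h. H h \<bullet> sgn (g x))) (at x)"
    using has_derivative_compose[OF gd has_derivative_norm[OF nz]] by simp
  have "((\<lambda>y. inverse (norm (g y))) has_derivative
      (\<lambda>h. - (inverse N * (H h \<bullet> sgn (g x)) * inverse N))) (at x)"
    using Deriv.has_derivative_inverse[OF _ nd] nz by (simp add: N_def)
  from has_derivative_scaleR[OF this gd]
  have D: "frechet_derivative (\<lambda>y. g y /\<^sub>R norm (g y)) (at x) =
      (\<lambda>h. inverse N *\<^sub>R H h + (- (inverse N * (H h \<bullet> sgn (g x)) * inverse N)) *\<^sub>R g x)"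
    by (intro frechet_derivative_at[symmetric]) (simp add: N_def)
  have "divg (\<lambda>y. g y /\<^sub>R norm (g y)) x = (\<Sum>b\<in>Basis.
      inverse N * (H b \<bullet> b) - inverse N * inverse N * inverse N * ((g x \<bullet> b) * (g x \<bullet> H b)))"
    unfolding divg_def D
    by (intro sum.cong refl) (simp add: inner_add_left inner_diff_right inner_add_right
        sgn_div_norm N_def[symmetric] inner_commute field_simps)
  also have "\<dots> = inverse N * lin_trace H - inverse N * inverse N * inverse N * (g x \<bullet> H (g x))"
    by (simp add: lin_trace_def sum_subtractf sum_distrib_left linear_inner_basis_expansion[OF lin, of "g x" "g x"])
  finally have "N * divg (\<lambda>y. g y /\<^sub>R norm (g y)) x
      = lin_trace H - inverse N * inverse N * (g x \<bullet> H (g x))"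
    using N by (simp add: field_simps)
  moreover have "\<nu> \<bullet> H \<nu> = inverse N * inverse N * (g x \<bullet> H (g x))"
    using lin by (simp add: \<nu>_def N_def linear_scale)
  ultimately show ?thesis by (simp add: N_def)
qed

lemma norm_linear_diff_le_basis_sum:
  fixes v :: "'a::euclidean_space"
  assumes "linear H" "linear G" and "norm v \<le> 1"
  shows "norm (H v - G v) \<le> (\<Sum>b\<in>Basis. norm (H b - G b))"
proof -
  have lin: "linear (\<lambda>w. H w - G w)" using assms by (intro linear_compose_sub)
  have "H v - G v = (\<Sum>b\<in>Basis. (v \<bullet> b) *\<^sub>R (H b - G b))"
    using linear_sum[OF lin] linear_scale[OF lin] euclidean_representation[of v]
    by (metis (no_types, lifting) sum.cong)
  also have "norm \<dots> \<le> (\<Sum>b\<in>Basis. norm ((v \<bullet> b) *\<^sub>R (H b - G b)))"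
    by (rule norm_sum)
  also have "\<dots> \<le> (\<Sum>b\<in>Basis. norm (H b - G b))"
  proof (rule sum_mono)
    fix b :: 'a assume "b \<in> Basis"
    then have "\<bar>v \<bullet> b\<bar> \<le> 1" using Basis_le_norm[of b v] assms(3) by linarith
    then show "norm ((v \<bullet> b) *\<^sub>R (H b - G b)) \<le> norm (H b - G b)"
      by (simp add: mult_left_le_one_le)
  qed
  finally show ?thesis .
qed

lemma tendsto_quadratic_form_diff:
  fixes v :: "nat \<Rightarrow> 'a::euclidean_space"
  assumes "\<And>j. linear (H j)" "linear G" and "\<And>j. norm (v j) \<le> 1"
    and conv: "\<And>b. b \<in> Basis \<Longrightarrow> (\<lambda>j. H j b) \<longlonglongrightarrow> G b"
  shows "(\<lambda>j. v j \<bullet> H j (v j) - v j \<bullet> G (v j)) \<longlonglongrightarrow> 0"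
proof (rule Lim_null_comparison)
  show "(\<lambda>j. \<Sum>b\<in>Basis. norm (H j b - G b)) \<longlonglongrightarrow> 0"
    using conv by (intro tendsto_null_sum tendsto_norm_zero LIM_zero)
  show "\<forall>\<^sub>F j in sequentially. norm (v j \<bullet> H j (v j) - v j \<bullet> G (v j)) \<le> (\<Sum>b\<in>Basis. norm (H j b - G b))"
  proof (intro always_eventually allI)
    fix j
    have "norm (v j \<bullet> H j (v j) - v j \<bullet> G (v j)) \<le> norm (v j) * norm (H j (v j) - G (v j))"
      by (metis Cauchy_Schwarz_ineq2 inner_diff_right real_norm_def)
    also have "\<dots> \<le> norm (H j (v j) - G (v j))"
      using assms(3)[of j] by (simp add: mult_left_le_one_le)
    also have "\<dots> \<le> (\<Sum>b\<in>Basis. norm (H j b - G b))"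
      using assms by (intro norm_linear_diff_le_basis_sum)
    finally show "norm (v j \<bullet> H j (v j) - v j \<bullet> G (v j)) \<le> (\<Sum>b\<in>Basis. norm (H j b - G b))" .
  qed
qed

lemma tendsto_lin_trace:
  assumes "\<And>b. b \<in> Basis \<Longrightarrow> (\<lambda>j. H j b) \<longlonglongrightarrow> G b"
  shows "(\<lambda>j. lin_trace (H j)) \<longlonglongrightarrow> lin_trace G"
  unfolding lin_trace_def using assms by (intro tendsto_sum tendsto_inner tendsto_const)

text \<open>The linear-algebra core of the theorem: \<open>G\<close> plays the Hessian at the singular point,
  \<open>H j\<close> the Hessians at the regular points and \<open>\<nu> j\<close> the unit normals there.\<close>

lemma axial_component_tendsto_zero:
  fixes \<nu> :: "nat \<Rightarrow> 'a::euclidean_space"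
  assumes A: "subspace A" and dim: "DIM('a) = dim A + m + 1" and m: "m > 0"
    and G: "linear G" "\<And>v. G v = - (1 / real m) *\<^sub>R (v - orth_proj A v)"
    and H: "\<And>j. linear (H j)" and conv: "\<And>b. (\<lambda>j. H j b) \<longlonglongrightarrow> G b"
    and unit: "\<And>j. norm (\<nu> j) = 1"
    and eqn: "\<And>j. lin_trace (H j) - \<nu> j \<bullet> H j (\<nu> j) = -1"
  shows "(\<lambda>j. orth_proj A (\<nu> j)) \<longlonglongrightarrow> 0"
proof -
  have "lin_trace G = (\<Sum>b\<in>Basis. - (1 / real m) * (1 - orth_proj A b \<bullet> b))"
    by (simp add: lin_trace_def G(2) inner_diff_left)
  also have "\<dots> = - (1 / real m) * (real DIM('a) - lin_trace (orth_proj A))"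
    by (simp only: lin_trace_def sum_subtractf flip: sum_distrib_left) simp
  finally have trace_G: "lin_trace G = - (real m + 1) / real m"
    using lin_trace_orth_proj[OF A] dim m by (simp add: field_simps)
  have quad_G: "\<nu> j \<bullet> G (\<nu> j) = - (1 / real m) * (1 - (norm (orth_proj A (\<nu> j)))\<^sup>2)" for j
  proof -
    have "\<nu> j \<bullet> G (\<nu> j) = - (1 / real m) * (\<nu> j \<bullet> \<nu> j - \<nu> j \<bullet> orth_proj A (\<nu> j))"
      by (simp add: G(2) inner_diff_right)
    then show ?thesis using inner_orth_proj_self[OF A, of "\<nu> j"] unit[of j] by (simp add: norm_eq_1)
  qed
  have sq: "(norm (orth_proj A (\<nu> j)))\<^sup>2
      = 1 + real m * (lin_trace (H j) + 1 - (\<nu> j \<bullet> H j (\<nu> j) - \<nu> j \<bullet> G (\<nu> j)))" for j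
  proof -
    have "(norm (orth_proj A (\<nu> j)))\<^sup>2 = 1 + real m * (\<nu> j \<bullet> G (\<nu> j))"
      using quad_G[of j] m by simp
    also have "\<nu> j \<bullet> G (\<nu> j) = lin_trace (H j) + 1 - (\<nu> j \<bullet> H j (\<nu> j) - \<nu> j \<bullet> G (\<nu> j))"
      using eqn[of j] by linarith
    finally show ?thesis .
  qed
  have trace_lim: "(\<lambda>j. lin_trace (H j)) \<longlonglongrightarrow> lin_trace G"
    using conv by (rule tendsto_lin_trace)
  have quad_lim: "(\<lambda>j. \<nu> j \<bullet> H j (\<nu> j) - \<nu> j \<bullet> G (\<nu> j)) \<longlonglongrightarrow> 0"
    using H G(1) unit conv by (intro tendsto_quadratic_form_diff) auto
  have "(\<lambda>j. (norm (orth_proj A (\<nu> j)))\<^sup>2) \<longlonglongrightarrow> 1 + real m * (lin_trace G + 1 - 0)"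
    unfolding sq
    by (rule tendsto_add[OF tendsto_const tendsto_mult[OF tendsto_const
          tendsto_diff[OF tendsto_add[OF trace_lim tendsto_const] quad_lim]]])
  also have "1 + real m * (lin_trace G + 1 - 0) = 0" using trace_G m by (simp add: field_simps)
  finally have "(\<lambda>j. sqrt ((norm (orth_proj A (\<nu> j)))\<^sup>2)) \<longlonglongrightarrow> sqrt 0"
    by (rule tendsto_real_sqrt)
  then show ?thesis by (simp add: tendsto_norm_zero_iff)
qed

theorem lemma2p2:
  fixes u :: "'a::euclidean_space \<Rightarrow> real"
    and K :: "'a set" and A :: "'a set"
    and n k :: nat and p :: 'a and q :: "nat \<Rightarrow> 'a"
  assumes dim: "DIM('a) = n + 1"
    and k_ge: "1 \<le> k" and k_le: "k \<le> n - 1"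
    \<comment> \<open>the compact connected domain bounded by M, and the arrival time u on it\<close>
    and K_compact: "compact K" and K_conn: "connected K"
    and u_cont: "continuous_on K u"
    and u_bdry: "\<forall>x\<in>frontier K. u x = 0"
    \<comment> \<open>u is twice differentiable (in the interior)\<close>
    and u_diff: "\<forall>x\<in>interior K. u differentiable (at x)"
    and u_diff2: "\<forall>x\<in>interior K. grad u differentiable (at x)"
    \<comment> \<open>level set flow equation at regular points\<close>
    and pde: "\<forall>x\<in>interior K. grad u x \<noteq> 0 \<longrightarrow>
               norm (grad u x) * divg (\<lambda>y. grad u y /\<^sub>R norm (grad u y)) x = -1"
    \<comment> \<open>p is a singular point in S_k minus S_(k-1): blowup R^k x S^(n-k) with axis A\<close>
    and p_int: "p \<in> interior K"
    and p_sing: "grad u p = 0"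
    and A_sub: "subspace A" and A_dim: "dim A = k"
    and hess_p: "\<forall>v. hess u p v = - (1 / real (n - k)) *\<^sub>R (v - orth_proj A v)"
    \<comment> \<open>u is C^2 at p: the Hessian is continuous at p\<close>
    and C2: "\<forall>v. continuous (at p) (\<lambda>x. hess u x v)"
    \<comment> \<open>regular points converging to p\<close>
    and q_in: "\<forall>j. q j \<in> interior K"
    and q_reg: "\<forall>j. grad u (q j) \<noteq> 0"
    and q_lim: "q \<longlonglongrightarrow> p"
  shows "(\<lambda>j. orth_proj A (grad u (q j) /\<^sub>R norm (grad u (q j)))) \<longlonglongrightarrow> 0"
proof -
  have hess: "(grad u has_derivative hess u x) (at x)" if "x \<in> interior K" for x
    using u_diff2 that frechet_derivative_works unfolding hess_def by blast
  have flow_eqn: "lin_trace (hess u (q j)) - (grad u (q j) /\<^sub>R norm (grad u (q j))) \<bullet>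
      hess u (q j) (grad u (q j) /\<^sub>R norm (grad u (q j))) = -1" for j
    using norm_mult_divg_normalized[OF hess[OF q_in[rule_format]] q_reg[rule_format]] pde q_in q_reg
    by simp
  have hess_lim: "(\<lambda>j. hess u (q j) v) \<longlonglongrightarrow> hess u p v" for v
    using isCont_tendsto_compose[OF C2[rule_format] q_lim] .
  show ?thesis
  proof (rule axial_component_tendsto_zero[OF A_sub _ _ _ _ _ hess_lim _ flow_eqn])
    show "DIM('a) = dim A + (n - k) + 1" "n - k > 0" using dim A_dim k_le k_ge by auto
    show "linear (hess u p)" "\<And>j. linear (hess u (q j))"
      using hess p_int q_in has_derivative_linear by blast+
    show "\<And>v. hess u p v = - (1 / real (n - k)) *\<^sub>R (v - orth_proj A v)"
      using hess_p by blast
    show "\<And>j. norm (grad u (q j) /\<^sub>R norm (grad u (q j))) = 1"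
      using q_reg by simp
  qed
qed

end
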